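(* Let $k$ be a field, $(X,\leq)$ a locally finite preordered set and $C=IC(X)$ its incidence coalgebra. Let $(\mathcal C_i)_{i\in I}$ be the equivalence classes of $\sim$ and $D_i=\sum_{x,y\in\mathcal C_i}k e_{x,y}$. Then: (i) the coradical $C_0$ of $C$ equals $\sum_{i\in I}D_i$; (ii) for every $n\geq 0$, the $(n+1)$-th term $C_n$ of the coradical filtration of $C$ is the subspace spanned by all $e_{x,y}$ such that the interval $[x,y]$ has length at most $n$.
   Context: A preorder is reflexive and transitive; $(X,\leq)$ is locally finite if each $[x,y]=\{z\mid x\leq z\leq y\}$ is finite. $IC(X)$ has $k$-basis $\{e_{x,y}\mid x\leq y\}$, comultiplication $\Delta(e_{x,y})=\sum_{x\leq z\leq y}e_{x,z}\otimes e_{z,y}$ and counit $\varepsilon(e_{x,y})=\delta_{x,y}$. $x\sim y$ means $x\leq y$ and $y\leq x$. The coradical $C_0$ is the sum of all simple subcoalgebras; for subspaces $U,V$, $U\wedge V=\Delta^{-1}(U\otimes C+C\otimes V)$, and $C_n=C_0\wedge C_{n-1}$ for $n\ge1$. For $x\leq y$, the length of $[x,y]$ is $0$ if $x\sim y$, and otherwise is the greatest $n>0$ such that there is a chain $x=x_0<x_1<\cdots<x_n=y$ in $X$ (where $a<b$ means $a\leq b$ and not $b\leq a$). *)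

theory Defs
  imports Main "HOL.Modules" "HOL-Library.Function_Algebras"
begin

definition fscale :: "'k::field \<Rightarrow> ('p \<Rightarrow> 'k) \<Rightarrow> ('p \<Rightarrow> 'k)" where
  "fscale c f = (\<lambda>p. c * f p)"

abbreviation kspan :: "('p \<Rightarrow> 'k::field) set \<Rightarrow> ('p \<Rightarrow> 'k) set" where
  "kspan S \<equiv> module.span fscale S"

abbreviation ksubspace :: "('p \<Rightarrow> 'k::field) set \<Rightarrow> bool" where
  "ksubspace S \<equiv> module.subspace fscale S"

definition locally_finite :: "'a::preorder itself \<Rightarrow> bool" where
  "locally_finite _ \<longleftrightarrow> (\<forall>x y::'a. finite {z. x \<le> z \<and> z \<le> y})"

text \<open>IC(X): the k-space with basis e_{x,y}, x \<le> y, i.e. finitely supported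
  coefficient functions on the pairs (x,y) with x \<le> y.\<close>
definition IC :: "('a::preorder \<times> 'a \<Rightarrow> 'k::field) set" where
  "IC = {f. finite {p. f p \<noteq> 0} \<and> (\<forall>a b. f (a, b) \<noteq> 0 \<longrightarrow> a \<le> b)}"

definition ebasis :: "'a \<Rightarrow> 'a \<Rightarrow> ('a \<times> 'a \<Rightarrow> 'k::field)" where
  "ebasis x y = (\<lambda>p. if p = (x, y) then 1 else 0)"

text \<open>IC(X) \<otimes> IC(X), with basis e_{a,b} \<otimes> e_{c,d}, represented by coefficient functions.\<close>
definition ICtensor :: "(('a::preorder \<times> 'a) \<times> ('a \<times> 'a) \<Rightarrow> 'k::field) set" where
  "ICtensor = {g. finite {q. g q \<noteq> 0} \<and>
     (\<forall>a b c d. g ((a, b), (c, d)) \<noteq> 0 \<longrightarrow> a \<le> b \<and> c \<le> d)}"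

definition tens :: "('p \<Rightarrow> 'k::field) \<Rightarrow> ('p \<Rightarrow> 'k) \<Rightarrow> ('p \<times> 'p \<Rightarrow> 'k)" where
  "tens u v = (\<lambda>(p, q). u p * v q)"

text \<open>Comultiplication: the linear extension of
  Delta(e_{x,y}) = sum_{x \<le> z \<le> y} e_{x,z} \<otimes> e_{z,y}, written coefficientwise.\<close>
definition Delta :: "('a::preorder \<times> 'a \<Rightarrow> 'k::field) \<Rightarrow> (('a \<times> 'a) \<times> ('a \<times> 'a) \<Rightarrow> 'k)" where
  "Delta f = (\<lambda>((a, b), (c, d)). if b = c \<and> a \<le> b \<and> c \<le> d then f (a, d) else 0)"

text \<open>Counit: the linear extension of epsilon(e_{x,y}) = delta_{x,y}.\<close>
definition counit :: "('a::preorder \<times> 'a \<Rightarrow> 'k::field) \<Rightarrow> 'k" where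
  "counit f = (\<Sum>x\<in>{x. f (x, x) \<noteq> 0}. f (x, x))"

definition tensor_sub :: "('a::preorder \<times> 'a \<Rightarrow> 'k::field) set \<Rightarrow> ('a \<times> 'a \<Rightarrow> 'k) set
    \<Rightarrow> (('a \<times> 'a) \<times> ('a \<times> 'a) \<Rightarrow> 'k) set" where
  "tensor_sub U V = kspan {tens u v | u v. u \<in> U \<and> v \<in> V}"

definition subcoalgebra :: "('a::preorder \<times> 'a \<Rightarrow> 'k::field) set \<Rightarrow> bool" where
  "subcoalgebra D \<longleftrightarrow> D \<subseteq> IC \<and> ksubspace D \<and> Delta ` D \<subseteq> tensor_sub D D"

definition simple_subcoalgebra :: "('a::preorder \<times> 'a \<Rightarrow> 'k::field) set \<Rightarrow> bool" where
  "simple_subcoalgebra D \<longleftrightarrow> subcoalgebra D \<and> D \<noteq> {0} \<and>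
     (\<forall>E. subcoalgebra E \<and> E \<subseteq> D \<longrightarrow> E = {0} \<or> E = D)"

definition coradical :: "('a::preorder \<times> 'a \<Rightarrow> 'k::field) set" where
  "coradical = kspan (\<Union>{D. simple_subcoalgebra D})"

definition wedge :: "('a::preorder \<times> 'a \<Rightarrow> 'k::field) set \<Rightarrow> ('a \<times> 'a \<Rightarrow> 'k) set
    \<Rightarrow> ('a \<times> 'a \<Rightarrow> 'k) set" where
  "wedge U V = {c \<in> IC. Delta c \<in> kspan (tensor_sub U IC \<union> tensor_sub IC V)}"

primrec coradical_filt :: "nat \<Rightarrow> ('a::preorder \<times> 'a \<Rightarrow> 'k::field) set" where
  "coradical_filt 0 = coradical"
| "coradical_filt (Suc n) = wedge coradical (coradical_filt n)"

definition equiv_rel :: "('a::preorder \<times> 'a) set" where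
  "equiv_rel = {(x, y). x \<le> y \<and> y \<le> x}"

definition sim_classes :: "'a::preorder set set" where
  "sim_classes = UNIV // equiv_rel"

definition Dblock :: "'a::preorder set \<Rightarrow> ('a \<times> 'a \<Rightarrow> 'k::field) set" where
  "Dblock Ci = kspan {ebasis x y | x y. x \<in> Ci \<and> y \<in> Ci}"

definition has_chain :: "'a::preorder \<Rightarrow> 'a \<Rightarrow> nat \<Rightarrow> bool" where
  "has_chain x y n \<longleftrightarrow> (\<exists>f::nat \<Rightarrow> 'a. f 0 = x \<and> f n = y \<and> (\<forall>i<n. f i < f (Suc i)))"

definition interval_length :: "'a::preorder \<Rightarrow> 'a \<Rightarrow> nat" where
  "interval_length x y =
     (if x \<le> y \<and> y \<le> x then 0 else (GREATEST n. n > 0 \<and> has_chain x y n))"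

end

theory Submission
  imports Defs
begin

text \<open>
  Every coefficient of Delta(f) is a coefficient of f, so slicing Delta(f) at a fixed left or right
  tensor factor stays inside any subcoalgebra containing f; slicing twice extracts f(s,v) e_{t,u}
  for every s \<le> t \<le> u \<le> v in the support. Hence a subcoalgebra is spanned by basis vectors, the
  simple ones are exactly the blocks D_i of the \<sim>-classes, and C_0 is spanned by the e_{x,y} with
  x \<sim> y. The same coefficient description turns C_0 \<and> V into a condition on intervals: e_{a,d}
  lies in C_0 \<and> C_{n-1} iff every b \<in> [a,d] satisfies b \<sim> a or [b,d] has length < n, which by
  removing or prepending the first step of a maximal chain says that [a,d] has length \<le> n.
\<close>

interpretation kmod: module "fscale :: 'k::field \<Rightarrow> ('p \<Rightarrow> 'k) \<Rightarrow> ('p \<Rightarrow> 'k)"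
  by unfold_locales (auto simp: fscale_def fun_eq_iff algebra_simps)

lemma sum_fun_apply: "(\<Sum>a\<in>A. f a) x = (\<Sum>a\<in>A. f a x)"
  by (induction A rule: infinite_finite_induct) auto

definition finsupp_on :: "'p set \<Rightarrow> ('p \<Rightarrow> 'k::field) set" where
  "finsupp_on A = {g. finite {p. g p \<noteq> 0} \<and> {p. g p \<noteq> 0} \<subseteq> A}"

definition basis_vec :: "'p \<Rightarrow> 'p \<Rightarrow> 'k::field" where
  "basis_vec r = (\<lambda>p. if p = r then 1 else 0)"

lemma subspace_finsupp_on: "ksubspace (finsupp_on A :: ('p \<Rightarrow> 'k::field) set)"
  unfolding kmod.subspace_def
proof (intro conjI ballI allI)
  fix f g :: "'p \<Rightarrow> 'k" assume "f \<in> finsupp_on A" "g \<in> finsupp_on A"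
  moreover have "{p. (f + g) p \<noteq> 0} \<subseteq> {p. f p \<noteq> 0} \<union> {p. g p \<noteq> 0}" by auto
  ultimately show "f + g \<in> finsupp_on A" unfolding finsupp_on_def by (auto intro: finite_subset)
next
  fix c and f :: "'p \<Rightarrow> 'k" assume "f \<in> finsupp_on A"
  moreover have "{p. fscale c f p \<noteq> 0} \<subseteq> {p. f p \<noteq> 0}" by (auto simp: fscale_def)
  ultimately show "fscale c f \<in> finsupp_on A" unfolding finsupp_on_def by (auto intro: finite_subset)
qed (simp add: finsupp_on_def)

lemma finsupp_on_mono: "A \<subseteq> B \<Longrightarrow> finsupp_on A \<subseteq> finsupp_on B"
  by (auto simp: finsupp_on_def)

lemma basis_vec_in_finsupp_on_iff: "basis_vec r \<in> finsupp_on A \<longleftrightarrow> r \<in> A"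
  by (auto simp: basis_vec_def finsupp_on_def)

lemma basis_vec_in_finsupp_on: "r \<in> A \<Longrightarrow> basis_vec r \<in> finsupp_on A"
  by (simp add: basis_vec_in_finsupp_on_iff)

lemma basis_vec_nonzero: "(basis_vec r :: 'p \<Rightarrow> 'k::field) \<noteq> 0"
  by (auto simp: basis_vec_def fun_eq_iff)

lemma finsupp_on_eq_sum_basis_vec:
  assumes "g \<in> finsupp_on A"
  shows "g = (\<Sum>p\<in>{p. g p \<noteq> 0}. fscale (g p) (basis_vec p))"
proof
  fix x
  have fin: "finite {p. g p \<noteq> 0}" using assms by (simp add: finsupp_on_def)
  have "(\<Sum>p\<in>{p. g p \<noteq> 0}. fscale (g p) (basis_vec p)) x = (\<Sum>p\<in>{p. g p \<noteq> 0}. if x = p then g p else 0)"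
    by (auto simp: sum_fun_apply fscale_def basis_vec_def intro: sum.cong)
  also have "\<dots> = g x"
    using fin by (simp add: sum.delta)
  finally show "g x = (\<Sum>p\<in>{p. g p \<noteq> 0}. fscale (g p) (basis_vec p)) x" ..
qed

lemma span_basis_vec: "kspan (basis_vec ` A) = (finsupp_on A :: ('p \<Rightarrow> 'k::field) set)"
proof
  show "kspan (basis_vec ` A) \<subseteq> (finsupp_on A :: ('p \<Rightarrow> 'k) set)"
    by (rule kmod.span_minimal) (auto simp: basis_vec_in_finsupp_on_iff subspace_finsupp_on)
  show "finsupp_on A \<subseteq> kspan (basis_vec ` A :: ('p \<Rightarrow> 'k) set)"
  proof
    fix g :: "'p \<Rightarrow> 'k" assume g: "g \<in> finsupp_on A"
    then have "\<forall>p\<in>{p. g p \<noteq> 0}. basis_vec p \<in> kspan (basis_vec ` A :: ('p \<Rightarrow> 'k) set)"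
      by (auto simp: finsupp_on_def intro: kmod.span_base)
    then show "g \<in> kspan (basis_vec ` A)"
      by (subst finsupp_on_eq_sum_basis_vec[OF g]) (auto intro: kmod.span_sum kmod.span_scale)
  qed
qed

lemma span_UN_finsupp_on:
  "kspan (\<Union>i\<in>I. finsupp_on (A i)) = (finsupp_on (\<Union>i\<in>I. A i) :: ('p \<Rightarrow> 'k::field) set)"
proof
  show "kspan (\<Union>i\<in>I. finsupp_on (A i)) \<subseteq> (finsupp_on (\<Union>i\<in>I. A i) :: ('p \<Rightarrow> 'k) set)"
    by (intro kmod.span_minimal subspace_finsupp_on UN_least finsupp_on_mono UN_upper)
  have "basis_vec ` (\<Union>i\<in>I. A i) \<subseteq> (\<Union>i\<in>I. finsupp_on (A i) :: ('p \<Rightarrow> 'k) set)"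
    by (auto simp: basis_vec_in_finsupp_on_iff)
  then show "finsupp_on (\<Union>i\<in>I. A i) \<subseteq> kspan (\<Union>i\<in>I. finsupp_on (A i) :: ('p \<Rightarrow> 'k) set)"
    by (metis kmod.span_mono span_basis_vec)
qed

lemma span_finsupp_on_Un: "kspan (finsupp_on A \<union> finsupp_on B) = (finsupp_on (A \<union> B) :: ('p \<Rightarrow> 'k::field) set)"
  using span_UN_finsupp_on[of id "{A, B}"] by simp

lemma tens_basis_vec: "tens (basis_vec p) (basis_vec q) = basis_vec (p, q)"
  by (auto simp: tens_def basis_vec_def fun_eq_iff)

lemma tens_in_finsupp_on:
  assumes "u \<in> finsupp_on P" "v \<in> finsupp_on Q"
  shows "tens u v \<in> finsupp_on (P \<times> Q)"
proof -
  have "{pq. tens u v pq \<noteq> 0} \<subseteq> {p. u p \<noteq> 0} \<times> {q. v q \<noteq> 0}"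
    by (auto simp: tens_def)
  moreover have "finite ({p. u p \<noteq> 0} \<times> {q. v q \<noteq> 0})"
    using assms by (simp add: finsupp_on_def)
  ultimately show ?thesis
    using assms unfolding finsupp_on_def by (auto dest: finite_subset)
qed

lemma subspace_tensor_sub: "ksubspace (tensor_sub U V)"
  by (simp add: tensor_sub_def kmod.subspace_span)

lemma basis_vec_in_tensor_sub:
  assumes "p \<in> P" "q \<in> Q"
  shows "basis_vec (p, q) \<in> tensor_sub (finsupp_on P) (finsupp_on Q)"
  unfolding tensor_sub_def tens_basis_vec[symmetric]
  using assms by (intro kmod.span_base) (blast intro: basis_vec_in_finsupp_on)

lemma tensor_sub_finsupp_on: "tensor_sub (finsupp_on P) (finsupp_on Q) = finsupp_on (P \<times> Q)"
proof
  show "tensor_sub (finsupp_on P) (finsupp_on Q) \<subseteq> finsupp_on (P \<times> Q)"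
    unfolding tensor_sub_def
    by (rule kmod.span_minimal) (auto intro: tens_in_finsupp_on subspace_finsupp_on)
  show "finsupp_on (P \<times> Q) \<subseteq> tensor_sub (finsupp_on P) (finsupp_on Q)"
    unfolding span_basis_vec[of "P \<times> Q", symmetric]
    by (rule kmod.span_minimal) (auto intro: basis_vec_in_tensor_sub subspace_tensor_sub)
qed

lemma IC_eq_finsupp_on: "IC = finsupp_on {(a, b). a \<le> b}"
  by (auto simp: IC_def finsupp_on_def)

lemma ebasis_eq_basis_vec: "ebasis x y = basis_vec (x, y)"
  by (simp add: ebasis_def basis_vec_def)

lemma mem_finsupp_on_le_iff:
  "c \<in> finsupp_on {(x, y). x \<le> y \<and> P x y} \<longleftrightarrow> c \<in> IC \<and> (\<forall>x y. c (x, y) \<noteq> 0 \<longrightarrow> P x y)"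
  by (auto simp: IC_def finsupp_on_def)

lemma locally_finiteD: "locally_finite TYPE('a::preorder) \<Longrightarrow> finite {z::'a. x \<le> z \<and> z \<le> y}"
  by (simp add: locally_finite_def)

lemma Delta_support:
  "{q. Delta f q \<noteq> 0} =
    (\<lambda>((a, d), z). ((a, z), (z, d))) ` (SIGMA ad:{p. f p \<noteq> 0}. {z. fst ad \<le> z \<and> z \<le> snd ad})"
  by (auto simp: Delta_def image_iff split: if_splits)

lemma Delta_in_finsupp_on_iff:
  assumes lf: "locally_finite TYPE('a::preorder)" and "(f :: 'a \<times> 'a \<Rightarrow> 'k::field) \<in> IC"
  shows "Delta f \<in> finsupp_on S \<longleftrightarrow>
    (\<forall>a d z. f (a, d) \<noteq> 0 \<longrightarrow> a \<le> z \<longrightarrow> z \<le> d \<longrightarrow> ((a, z), (z, d)) \<in> S)"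
proof -
  have "finite {q. Delta f q \<noteq> 0}"
    unfolding Delta_support using assms locally_finiteD[OF lf]
    by (auto simp: IC_def intro!: finite_imageI finite_SigmaI)
  then show ?thesis
    by (auto simp: finsupp_on_def Delta_def split: if_splits)
qed

lemma tensor_sub_slices:
  assumes D: "ksubspace D" and "h \<in> tensor_sub D D"
  shows "(\<lambda>p. h (p, q)) \<in> D" and "(\<lambda>p. h (q, p)) \<in> D"
proof -
  let ?G = "{g. (\<lambda>p. g (p, q)) \<in> D \<and> (\<lambda>p. g (q, p)) \<in> D}"
  have "tensor_sub D D \<subseteq> ?G"
    unfolding tensor_sub_def
  proof (rule kmod.span_minimal)
    show "{tens u v |u v. u \<in> D \<and> v \<in> D} \<subseteq> ?G"
    proof clarify
      fix u v assume "u \<in> D" "v \<in> D"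
      moreover have "(\<lambda>p. tens u v (p, q)) = fscale (v q) u" "(\<lambda>p. tens u v (q, p)) = fscale (u q) v"
        by (auto simp: tens_def fscale_def fun_eq_iff mult.commute)
      ultimately show "(\<lambda>p. tens u v (p, q)) \<in> D \<and> (\<lambda>p. tens u v (q, p)) \<in> D"
        using kmod.subspace_scale[OF D] by auto
    qed
    show "ksubspace ?G"
      using kmod.subspace_0[OF D] kmod.subspace_add[OF D] kmod.subspace_scale[OF D]
      unfolding kmod.subspace_def by (auto simp: zero_fun_def plus_fun_def fscale_def)
  qed
  with assms show "(\<lambda>p. h (p, q)) \<in> D" "(\<lambda>p. h (q, p)) \<in> D" by auto
qed

text \<open>Slicing Delta f at (s,t) on the left and then at (u,v) on the right leaves f(s,v) e_{t,u}.\<close>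
lemma subcoalgebra_basis_vec_mem:
  assumes D: "subcoalgebra (D :: ('a::preorder \<times> 'a \<Rightarrow> 'k::field) set)"
    and "f \<in> D" and nz: "f (s, v) \<noteq> 0" and "s \<le> t" "t \<le> u" "u \<le> v"
  shows "basis_vec (t, u) \<in> D"
proof -
  have sub: "ksubspace D" and Delta_mem: "\<And>g. g \<in> D \<Longrightarrow> Delta g \<in> tensor_sub D D"
    using D by (auto simp: subcoalgebra_def)
  define g where "g = (\<lambda>p. Delta (\<lambda>p'. Delta f ((s, t), p')) (p, (u, v)))"
  have "g \<in> D"
    unfolding g_def
    by (intro tensor_sub_slices[OF sub] Delta_mem) (use \<open>f \<in> D\<close> in simp)
  moreover have "g = fscale (f (s, v)) (basis_vec (t, u))"
    using assms(4-6) order.trans[OF \<open>t \<le> u\<close> \<open>u \<le> v\<close>]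
    by (auto simp: g_def Delta_def fscale_def basis_vec_def fun_eq_iff)
  ultimately have "fscale (inverse (f (s, v))) (fscale (f (s, v)) (basis_vec (t, u))) \<in> D"
    using kmod.subspace_scale[OF sub] by metis
  with nz show ?thesis by (simp add: fscale_def mult.assoc[symmetric])
qed

definition sim_class :: "'a::preorder \<Rightarrow> 'a set" where
  "sim_class s = {y. s \<le> y \<and> y \<le> s}"

lemma sim_classes_eq_range: "sim_classes = range sim_class"
  by (auto simp: sim_classes_def quotient_def equiv_rel_def sim_class_def Image_def)

lemma sim_class_eqI: "t \<in> sim_class s \<Longrightarrow> sim_class t = sim_class s"
  unfolding sim_class_def using order_trans by blast

lemma Dblock_eq_finsupp_on: "Dblock C = (finsupp_on (C \<times> C) :: ('a::preorder \<times> 'a \<Rightarrow> 'k::field) set)"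
proof -
  have "{ebasis x y | x y. x \<in> C \<and> y \<in> C} = (basis_vec ` (C \<times> C) :: ('a \<times> 'a \<Rightarrow> 'k) set)"
    by (auto simp: ebasis_eq_basis_vec)
  then show ?thesis by (simp add: Dblock_def span_basis_vec)
qed

lemma basis_vec_in_Dblock: "basis_vec (s, s) \<in> Dblock (sim_class s)"
  by (simp add: Dblock_eq_finsupp_on basis_vec_in_finsupp_on_iff sim_class_def)

lemma Dblock_nonzero: "Dblock (sim_class s) \<noteq> {0}"
  using basis_vec_in_Dblock basis_vec_nonzero by fastforce

lemma subcoalgebra_Dblock:
  assumes lf: "locally_finite TYPE('a::preorder)"
  shows "subcoalgebra (Dblock (sim_class (s::'a)) :: ('a \<times> 'a \<Rightarrow> 'k::field) set)"
  unfolding subcoalgebra_def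
proof (intro conjI)
  have "sim_class s \<times> sim_class s \<subseteq> {(a, b). a \<le> b}"
    unfolding sim_class_def using order_trans by blast
  then show sub: "(Dblock (sim_class s) :: ('a \<times> 'a \<Rightarrow> 'k) set) \<subseteq> IC"
    unfolding Dblock_eq_finsupp_on IC_eq_finsupp_on by (rule finsupp_on_mono)
  show "ksubspace (Dblock (sim_class s) :: ('a \<times> 'a \<Rightarrow> 'k) set)"
    by (simp add: Dblock_eq_finsupp_on subspace_finsupp_on)
  show "Delta ` (Dblock (sim_class s) :: ('a \<times> 'a \<Rightarrow> 'k) set)
    \<subseteq> tensor_sub (Dblock (sim_class s)) (Dblock (sim_class s))"
  proof clarify
    fix f :: "'a \<times> 'a \<Rightarrow> 'k" assume f: "f \<in> Dblock (sim_class s)"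
    have "((a, z), (z, d)) \<in> (sim_class s \<times> sim_class s) \<times> (sim_class s \<times> sim_class s)"
      if "f (a, d) \<noteq> 0" "a \<le> z" "z \<le> d" for a d z
    proof -
      have "a \<in> sim_class s" "d \<in> sim_class s"
        using f that(1) by (auto simp: Dblock_eq_finsupp_on finsupp_on_def)
      with that(2,3) have "z \<in> sim_class s"
        unfolding sim_class_def using order_trans by blast
      with \<open>a \<in> sim_class s\<close> \<open>d \<in> sim_class s\<close> show ?thesis by simp
    qed
    moreover have "f \<in> IC" using f sub by blast
    ultimately show "Delta f \<in> tensor_sub (Dblock (sim_class s)) (Dblock (sim_class s))"
      unfolding Dblock_eq_finsupp_on tensor_sub_finsupp_on Delta_in_finsupp_on_iff[OF lf \<open>f \<in> IC\<close>]
      by blast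
  qed
qed

lemma subcoalgebra_contains_Dblock:
  assumes D: "subcoalgebra (D :: ('a::preorder \<times> 'a \<Rightarrow> 'k::field) set)" and "D \<noteq> {0}"
  obtains s where "Dblock (sim_class s) \<subseteq> D"
proof -
  have "0 \<in> D" using D kmod.subspace_0 by (auto simp: subcoalgebra_def)
  with \<open>D \<noteq> {0}\<close> obtain f where "f \<in> D" "f \<noteq> 0" by blast
  then obtain s v where nz: "f (s, v) \<noteq> 0" by (auto simp: fun_eq_iff)
  moreover have "f \<in> IC" using \<open>f \<in> D\<close> D by (auto simp: subcoalgebra_def)
  ultimately have "s \<le> v" by (auto simp: IC_def)
  have "basis_vec ` (sim_class s \<times> sim_class s) \<subseteq> D"
  proof clarify
    fix t u assume "t \<in> sim_class s" "u \<in> sim_class s"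
    then have "s \<le> t" "t \<le> u" "u \<le> v"
      using \<open>s \<le> v\<close> unfolding sim_class_def
      by (auto intro: order_trans[of t s u] order_trans[of u s v])
    then show "basis_vec (t, u) \<in> D"
      using subcoalgebra_basis_vec_mem[OF D \<open>f \<in> D\<close> nz] by blast
  qed
  then have "Dblock (sim_class s) \<subseteq> D"
    using D unfolding Dblock_eq_finsupp_on span_basis_vec[symmetric] subcoalgebra_def
    by (simp add: kmod.span_minimal)
  then show thesis by (rule that)
qed

lemma simple_subcoalgebra_iff:
  assumes lf: "locally_finite TYPE('a::preorder)"
  shows "simple_subcoalgebra (D :: ('a \<times> 'a \<Rightarrow> 'k::field) set) \<longleftrightarrow> D \<in> Dblock ` sim_classes"
proof
  assume "simple_subcoalgebra D"
  then have D: "subcoalgebra D" "D \<noteq> {0}"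
    and minimal: "\<And>E. subcoalgebra E \<Longrightarrow> E \<subseteq> D \<Longrightarrow> E = {0} \<or> E = D"
    by (auto simp: simple_subcoalgebra_def)
  obtain s where "Dblock (sim_class s) \<subseteq> D"
    using subcoalgebra_contains_Dblock[OF D] .
  with minimal[OF subcoalgebra_Dblock[OF lf]] have "Dblock (sim_class s) = D"
    using Dblock_nonzero by blast
  then show "D \<in> Dblock ` sim_classes"
    by (auto simp: sim_classes_eq_range)
next
  assume "D \<in> Dblock ` sim_classes"
  then obtain s where D: "D = Dblock (sim_class s)"
    by (auto simp: sim_classes_eq_range)
  have "D \<subseteq> E" if E: "subcoalgebra E" "E \<subseteq> D" "E \<noteq> {0}" for E :: "('a \<times> 'a \<Rightarrow> 'k) set"
  proof -
    obtain t where t: "Dblock (sim_class t) \<subseteq> E"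
      using subcoalgebra_contains_Dblock[OF E(1,3)] .
    then have "basis_vec (t, t) \<in> D"
      using basis_vec_in_Dblock E(2) by blast
    then have "sim_class t = sim_class s"
      unfolding D by (intro sim_class_eqI) (simp add: Dblock_eq_finsupp_on basis_vec_in_finsupp_on_iff)
    with t show ?thesis
      unfolding D by simp
  qed
  moreover have "subcoalgebra D" "D \<noteq> {0}"
    using D subcoalgebra_Dblock[OF lf] Dblock_nonzero by simp_all
  ultimately show "simple_subcoalgebra D"
    unfolding simple_subcoalgebra_def by blast
qed

lemma coradical_eq_span_Dblocks:
  assumes "locally_finite TYPE('a::preorder)"
  shows "(coradical :: ('a \<times> 'a \<Rightarrow> 'k::field) set) = kspan (\<Union>C\<in>sim_classes. Dblock C)"
  unfolding coradical_def simple_subcoalgebra_iff[OF assms] by simp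

lemma span_Dblocks:
  "kspan (\<Union>C\<in>sim_classes. Dblock C) =
    (finsupp_on {(x, y). x \<le> y \<and> y \<le> x} :: ('a::preorder \<times> 'a \<Rightarrow> 'k::field) set)"
proof -
  have "(\<Union>C\<in>sim_classes. C \<times> C) = {(x, y::'a). x \<le> y \<and> y \<le> x}"
    unfolding sim_classes_eq_range sim_class_def using order_trans by blast
  then show ?thesis
    by (simp add: Dblock_eq_finsupp_on span_UN_finsupp_on)
qed

lemma has_chain_0 [simp]: "has_chain x y 0 \<longleftrightarrow> x = y"
  by (auto simp: has_chain_def)

lemma has_chain_Suc: "has_chain x y (Suc n) \<longleftrightarrow> (\<exists>z. x < z \<and> has_chain z y n)"
proof
  assume "has_chain x y (Suc n)"
  then obtain f where "f 0 = x" "f (Suc n) = y" "\<forall>i<Suc n. f i < f (Suc i)"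
    by (auto simp: has_chain_def)
  then have "x < f 1" "has_chain (f 1) y n"
    unfolding has_chain_def by (auto intro!: exI[of _ "\<lambda>i. f (Suc i)"])
  then show "\<exists>z. x < z \<and> has_chain z y n" by blast
next
  assume "\<exists>z. x < z \<and> has_chain z y n"
  then obtain z f where "x < z" "f 0 = z" "f n = y" "\<forall>i<n. f i < f (Suc i)"
    by (auto simp: has_chain_def)
  then show "has_chain x y (Suc n)"
    unfolding has_chain_def
    by (intro exI[of _ "\<lambda>i. if i = 0 then x else f (i - 1)"]) (auto simp: less_Suc_eq_0_disj)
qed

lemma has_chain_le: "has_chain x y n \<Longrightarrow> x \<le> y"
proof (induction n arbitrary: x)
  case (Suc n)
  then obtain z where "x < z" "z \<le> y" by (auto simp: has_chain_Suc)
  then show ?case by (meson less_imp_le order.trans)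
qed simp

lemma has_chain_less: "has_chain x y n \<Longrightarrow> 0 < n \<Longrightarrow> x < y"
  by (cases n) (auto simp: has_chain_Suc dest!: has_chain_le elim: less_le_trans)

lemma has_chain_less_card:
  assumes "finite {z. x \<le> z \<and> z \<le> y}" and "has_chain x y n"
  shows "n < card {z. x \<le> z \<and> z \<le> y}"
  using assms
proof (induction n arbitrary: x)
  case 0
  then show ?case by (auto simp: card_gt_0_iff)
next
  case (Suc n)
  from Suc.prems(2) obtain z where "x < z" and chain: "has_chain z y n"
    by (auto simp: has_chain_Suc)
  have "{w. z \<le> w \<and> w \<le> y} \<subseteq> {w. x \<le> w \<and> w \<le> y}"
    using \<open>x < z\<close> by (auto intro: order_trans[of x z] less_imp_le)
  moreover have "x \<in> {w. x \<le> w \<and> w \<le> y} - {w. z \<le> w \<and> w \<le> y}"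
    using \<open>x < z\<close> has_chain_le[OF chain] by (auto intro: order_trans[of x z] simp: less_le_not_le)
  ultimately have "card {w. z \<le> w \<and> w \<le> y} < card {w. x \<le> w \<and> w \<le> y}"
    using Suc.prems(1) by (intro psubset_card_mono) blast+
  moreover have "n < card {w. z \<le> w \<and> w \<le> y}"
    using Suc.IH[OF _ chain] Suc.prems(1) \<open>{w. z \<le> w \<and> w \<le> y} \<subseteq> _\<close> finite_subset by blast
  ultimately show ?case by simp
qed

lemma has_chain_eq_0:
  assumes "has_chain x y m" and "y \<le> x"
  shows "m = 0"
proof (rule ccontr)
  assume "m \<noteq> 0"
  then have "x < y" using has_chain_less[OF assms(1)] by simp
  with assms(2) show False by (simp add: less_le_not_le)
qed

lemma interval_length_le_iff:
  assumes "locally_finite TYPE('a::preorder)" and "(x::'a) \<le> y"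
  shows "interval_length x y \<le> n \<longleftrightarrow> (\<forall>m. has_chain x y m \<longrightarrow> m \<le> n)"
proof (cases "y \<le> x")
  case True
  then have "interval_length x y = 0"
    using \<open>x \<le> y\<close> by (simp add: interval_length_def)
  with True show ?thesis using has_chain_eq_0 by fastforce
next
  case False
  define P where "P m \<longleftrightarrow> 0 < m \<and> has_chain x y m" for m
  have length_eq: "interval_length x y = (GREATEST m. P m)"
    using False by (simp add: interval_length_def P_def)
  have "x < y"
    using False \<open>x \<le> y\<close> by (simp add: less_le_not_le)
  then have P1: "P 1"
    by (simp add: P_def has_chain_Suc)
  have bounded: "P m \<Longrightarrow> m \<le> card {z. x \<le> z \<and> z \<le> y}" for m
    unfolding P_def using has_chain_less_card[OF locally_finiteD[OF assms(1)]] by (meson less_imp_le)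
  have longest: "has_chain x y (interval_length x y)"
    unfolding length_eq using GreatestI_nat[of P, OF P1 bounded] by (simp add: P_def)
  have "m \<le> interval_length x y" if "has_chain x y m" for m
  proof (cases "m = 0")
    case False
    then have "P m" using that by (simp add: P_def)
    then show ?thesis unfolding length_eq by (rule Greatest_le_nat[of P, OF _ bounded])
  qed simp
  with longest show ?thesis by (meson order.trans)
qed

lemma interval_length_Suc_le_iff:
  assumes lf: "locally_finite TYPE('a::preorder)" and "(a::'a) \<le> d"
  shows "interval_length a d \<le> Suc n \<longleftrightarrow>
    (\<forall>b. a \<le> b \<longrightarrow> b \<le> d \<longrightarrow> b \<le> a \<or> interval_length b d \<le> n)"
proof
  assume long: "interval_length a d \<le> Suc n"
  show "\<forall>b. a \<le> b \<longrightarrow> b \<le> d \<longrightarrow> b \<le> a \<or> interval_length b d \<le> n"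
  proof (intro allI impI)
    fix b assume "a \<le> b" "b \<le> d"
    show "b \<le> a \<or> interval_length b d \<le> n"
    proof (cases "b \<le> a")
      case False
      with \<open>a \<le> b\<close> have "a < b" by (simp add: less_le_not_le)
      have "m \<le> n" if "has_chain b d m" for m
      proof -
        have "has_chain a d (Suc m)"
          using \<open>a < b\<close> that by (auto simp: has_chain_Suc)
        then show ?thesis
          using long interval_length_le_iff[OF lf \<open>a \<le> d\<close>] by fastforce
      qed
      then show ?thesis
        using interval_length_le_iff[OF lf \<open>b \<le> d\<close>] by blast
    qed simp
  qed
next
  assume short: "\<forall>b. a \<le> b \<longrightarrow> b \<le> d \<longrightarrow> b \<le> a \<or> interval_length b d \<le> n"
  have "m \<le> Suc n" if long_chain: "has_chain a d m" for m
  proof (cases m)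
    case (Suc k)
    then obtain b where "a < b" and chain: "has_chain b d k"
      using long_chain by (auto simp: has_chain_Suc)
    then have "a \<le> b" "\<not> b \<le> a" and "b \<le> d"
      using has_chain_le[OF chain] by (simp_all add: less_le_not_le)
    then have "interval_length b d \<le> n"
      using short by blast
    then show ?thesis
      using chain interval_length_le_iff[OF lf \<open>b \<le> d\<close>] Suc by simp
  qed simp
  then show "interval_length a d \<le> Suc n"
    using interval_length_le_iff[OF lf \<open>a \<le> d\<close>] by blast
qed

lemma interval_length_eq_0_iff:
  assumes lf: "locally_finite TYPE('a::preorder)" and "(x::'a) \<le> y"
  shows "interval_length x y = 0 \<longleftrightarrow> y \<le> x"
proof
  assume "interval_length x y = 0"
  show "y \<le> x"
  proof (rule ccontr)
    assume "\<not> y \<le> x"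
    with \<open>x \<le> y\<close> have "has_chain x y (Suc 0)"
      by (simp add: has_chain_Suc less_le_not_le)
    with \<open>interval_length x y = 0\<close> show False
      using interval_length_le_iff[OF assms, of 0] by fastforce
  qed
qed (simp add: interval_length_def \<open>x \<le> y\<close>)

lemma wedge_finsupp_on_iff:
  assumes lf: "locally_finite TYPE('a::preorder)"
  shows "(c :: 'a \<times> 'a \<Rightarrow> 'k::field) \<in> wedge (finsupp_on A) (finsupp_on B) \<longleftrightarrow>
    c \<in> IC \<and> (\<forall>a d z. c (a, d) \<noteq> 0 \<longrightarrow> a \<le> z \<longrightarrow> z \<le> d \<longrightarrow> (a, z) \<in> A \<or> (z, d) \<in> B)"
proof -
  let ?R = "{(a, b). (a::'a) \<le> b}"
  have "c \<in> wedge (finsupp_on A) (finsupp_on B) \<longleftrightarrow>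
      c \<in> IC \<and> Delta c \<in> finsupp_on (A \<times> ?R \<union> ?R \<times> B)"
    unfolding wedge_def IC_eq_finsupp_on tensor_sub_finsupp_on span_finsupp_on_Un by simp
  also have "\<dots> \<longleftrightarrow>
      c \<in> IC \<and> (\<forall>a d z. c (a, d) \<noteq> 0 \<longrightarrow> a \<le> z \<longrightarrow> z \<le> d \<longrightarrow> (a, z) \<in> A \<or> (z, d) \<in> B)"
  proof (cases "c \<in> IC")
    case True
    then show ?thesis by (simp add: Delta_in_finsupp_on_iff[OF lf True])
  qed simp
  finally show ?thesis .
qed

lemma wedge_interval_length_le:
  assumes lf: "locally_finite TYPE('a::preorder)"
  shows "wedge (finsupp_on {(x, y). x \<le> y \<and> y \<le> x})
      (finsupp_on {(x, y). x \<le> y \<and> interval_length x y \<le> n})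
    = (finsupp_on {(x, y). x \<le> y \<and> interval_length x y \<le> Suc n} :: ('a \<times> 'a \<Rightarrow> 'k::field) set)"
proof (intro set_eqI)
  fix c :: "'a \<times> 'a \<Rightarrow> 'k"
  have "c \<in> wedge (finsupp_on {(x, y). x \<le> y \<and> y \<le> x})
      (finsupp_on {(x, y). x \<le> y \<and> interval_length x y \<le> n}) \<longleftrightarrow>
    c \<in> IC \<and> (\<forall>a d. c (a, d) \<noteq> 0 \<longrightarrow>
      (\<forall>z. a \<le> z \<longrightarrow> z \<le> d \<longrightarrow> z \<le> a \<or> interval_length z d \<le> n))"
    unfolding wedge_finsupp_on_iff[OF lf] by auto
  also have "\<dots> \<longleftrightarrow> c \<in> IC \<and> (\<forall>a d. c (a, d) \<noteq> 0 \<longrightarrow> interval_length a d \<le> Suc n)"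
  proof (cases "c \<in> IC")
    case True
    then have "c (a, d) \<noteq> 0 \<Longrightarrow> a \<le> d" for a d by (simp add: IC_def)
    with True show ?thesis by (simp add: interval_length_Suc_le_iff[OF lf])
  qed simp
  also have "\<dots> \<longleftrightarrow> c \<in> finsupp_on {(x, y). x \<le> y \<and> interval_length x y \<le> Suc n}"
    by (simp add: mem_finsupp_on_le_iff)
  finally show "c \<in> wedge (finsupp_on {(x, y). x \<le> y \<and> y \<le> x})
      (finsupp_on {(x, y). x \<le> y \<and> interval_length x y \<le> n}) \<longleftrightarrow>
    c \<in> finsupp_on {(x, y). x \<le> y \<and> interval_length x y \<le> Suc n}" .
qed

lemma coradical_filt_eq_finsupp_on:
  assumes lf: "locally_finite TYPE('a::preorder)"
  shows "(coradical_filt n :: ('a \<times> 'a \<Rightarrow> 'k::field) set) =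
    finsupp_on {(x, y). x \<le> y \<and> interval_length x y \<le> n}"
proof (induction n)
  case 0
  have "{(x, y). x \<le> y \<and> y \<le> x} = {(x, y::'a). x \<le> y \<and> interval_length x y \<le> 0}"
    using interval_length_eq_0_iff[OF lf] by auto
  then show ?case
    by (simp add: coradical_eq_span_Dblocks[OF lf] span_Dblocks)
next
  case (Suc n)
  then show ?case
    by (simp add: coradical_eq_span_Dblocks[OF lf] span_Dblocks wedge_interval_length_le[OF lf])
qed

theorem mainTheorem4:
  assumes "locally_finite TYPE('a::preorder)"
  shows "(coradical :: ('a \<times> 'a \<Rightarrow> 'k::field) set) = kspan (\<Union>Ci\<in>sim_classes. Dblock Ci)
       \<and> (\<forall>n. (coradical_filt n :: ('a \<times> 'a \<Rightarrow> 'k::field) set) =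
              kspan {ebasis x y | x y. x \<le> y \<and> interval_length x y \<le> n})"
proof (intro conjI allI)
  show "(coradical :: ('a \<times> 'a \<Rightarrow> 'k) set) = kspan (\<Union>Ci\<in>sim_classes. Dblock Ci)"
    by (rule coradical_eq_span_Dblocks[OF assms])
  fix n
  have "{ebasis x y | x y. x \<le> y \<and> interval_length x y \<le> n} =
      (basis_vec ` {(x, y). x \<le> y \<and> interval_length x y \<le> n} :: ('a \<times> 'a \<Rightarrow> 'k) set)"
    by (auto simp: ebasis_eq_basis_vec)
  then show "(coradical_filt n :: ('a \<times> 'a \<Rightarrow> 'k) set) =
      kspan {ebasis x y | x y. x \<le> y \<and> interval_length x y \<le> n}"
    by (simp add: coradical_filt_eq_finsupp_on[OF assms] span_basis_vec)
qed

end
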